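(* Let $m$ be a positive integer, and write $m = 2^{\nu_2(m)} m_1$ with $m_1$ odd. If $m_1 \equiv 1 \pmod 4$, then $S_2(m)$ is empty.
   Context: For a positive integer $x$, $\nu_2(x)$ denotes the largest integer $e$ such that $2^e$ divides $x$. For a positive integer $m$, consider positive rational solutions $(x,y)$ of $x^y = y^{mx}$ with $x \neq 1$. For such a solution, $r = \log y / \log x$ is a positive rational number (so $y = x^r$); write $r = a/b$ with $a,b$ positive coprime integers. For an integer $k \ge 1$, $S_k(m)$ denotes the set of such solutions $(x,y)$ for which $|a-b| = k$. *)

theory Defs
  imports Complex_Main "HOL-Computational_Algebra.Primes"
begin

definition nu2 :: "nat \<Rightarrow> nat" where
  "nu2 x = multiplicity (2::nat) x"

definition S :: "nat \<Rightarrow> nat \<Rightarrow> (rat \<times> rat) set" where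
  "S k m = {(x, y). x > 0 \<and> y > 0 \<and> x \<noteq> 1 \<and>
     (real_of_rat x) powr (real_of_rat y) = (real_of_rat y) powr (real m * real_of_rat x) \<and>
     (\<exists>a b :: nat. a > 0 \<and> b > 0 \<and> coprime a b \<and>
        ln (real_of_rat y) / ln (real_of_rat x) = real a / real b \<and>
        \<bar>int a - int b\<bar> = int k)}"

end

theory Submission
  imports Defs "HOL-Computational_Algebra.Nth_Powers"
begin

text \<open>A solution in \<open>S\<^sub>k(m)\<close> with exponent ratio \<open>a/b\<close> satisfies \<open>y = (m a / b) x\<close> and
  \<open>y\<^sup>b = x\<^sup>a\<close>, both over \<open>\<rat>\<close>. For \<open>k = 2\<close> the numbers \<open>a\<close>, \<open>b\<close> are odd, so the
  second relation makes \<open>(m a / b)\<^sup>b\<close> and hence \<open>m a / b\<close> a rational square, i.e.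
  \<open>m a b\<close> is a perfect square. But \<open>a b \<equiv> 3 (mod 4)\<close>, so the odd part of \<open>m a b\<close> is
  \<open>\<equiv> 3 (mod 4)\<close> when that of \<open>m\<close> is \<open>\<equiv> 1 (mod 4)\<close>, and such a number is never a square.\<close>

lemma odd_square_mod_4:
  fixes n :: nat
  assumes "odd n"
  shows "n\<^sup>2 mod 4 = 1"
proof -
  obtain k where "n = 2 * k + 1" using assms oddE by blast
  then have "n\<^sup>2 = 4 * (k\<^sup>2 + k) + 1" by (simp add: power2_eq_square algebra_simps)
  then show ?thesis by simp
qed

lemma not_square_pow2_mult_3_mod_4:
  fixes c :: nat
  assumes "c mod 4 = 3"
  shows "\<not> is_square (2 ^ e * c)"
proof
  assume "is_square (2 ^ e * c)"
  moreover have "odd c" using assms by presburger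
  then have "coprime (2 ^ e) c" by simp
  ultimately have "is_square c" by (simp add: is_nth_power_mult_coprime_nat_iff)
  then obtain n where n: "c = n\<^sup>2" by (elim is_nth_powerE)
  with \<open>odd c\<close> have "odd n" by simp
  then have "c mod 4 = 1" using n odd_square_mod_4 by simp
  with assms show False by simp
qed

lemma coprime_diff_2_mult_mod_4:
  fixes a b :: nat
  assumes "coprime a b" and "\<bar>int a - int b\<bar> = 2"
  shows "a * b mod 4 = 3"
proof -
  have ab: "a = b + 2 \<or> b = a + 2" using assms(2) by linarith
  have "odd b"
  proof
    assume "even b"
    with ab have "even a" by auto
    with \<open>even b\<close> have "2 dvd gcd a b" by simp
    with assms(1) show False by simp
  qed
  moreover have "odd s \<Longrightarrow> s * (s + 2) mod 4 = 3" for s :: nat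
  proof -
    assume "odd s"
    then obtain j where "s = 2 * j + 1" using oddE by blast
    then have "s * (s + 2) = 4 * (j * j + 2 * j) + 3" by (simp add: algebra_simps)
    then show ?thesis by presburger
  qed
  ultimately show ?thesis using ab by (auto simp: mult.commute)
qed

lemma rat_power_eq_of_nat_imp_nth_power:
  fixes t :: rat
  assumes "t ^ k = of_nat N"
  shows "is_nth_power k N"
proof -
  obtain p q where pq: "quotient_of t = (p, q)" by (cases "quotient_of t") auto
  have t: "t = of_int p / of_int q" and "q > 0" and "coprime p q"
    using quotient_of_div[OF pq] quotient_of_denom_pos[OF pq] quotient_of_coprime[OF pq] by auto
  from assms have "(of_int (p ^ k) :: rat) = of_int (int N * q ^ k)"
    using \<open>q > 0\<close> by (simp add: t power_divide field_simps)
  then have pk: "p ^ k = int N * q ^ k" by (simp only: of_int_eq_iff)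
  have "coprime (q ^ k) (p ^ k)" using \<open>coprime p q\<close> by (simp add: coprime_commute)
  moreover have "q ^ k dvd p ^ k" using pk by simp
  ultimately have "is_unit (q ^ k)" using coprime_common_divisor[OF _ dvd_refl] by blast
  then have "q ^ k = 1" using \<open>q > 0\<close> by simp
  then have "int N = \<bar>p\<bar> ^ k" using pk by (metis mult_1_right abs_of_nat power_abs)
  then have "N = nat \<bar>p\<bar> ^ k" by (metis abs_ge_zero nat_int nat_power_eq)
  then show ?thesis by (rule is_nth_powerI)
qed

lemma odd_power_square_imp_square:
  fixes q w :: "'a :: field"
  assumes "odd n" and "q ^ n = w\<^sup>2"
  shows "is_square q"
proof (cases "q = 0")
  case False
  obtain j where "n = 2 * j + 1" using assms(1) oddE by blast
  then have "q ^ n = q * (q ^ j)\<^sup>2" by (simp add: power_add power_mult[symmetric] mult.commute)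
  with assms(2) False have "q = (w / q ^ j)\<^sup>2" by (simp add: power_divide field_simps)
  then show ?thesis by (rule is_nth_powerI)
qed simp

lemma S_memE:
  assumes "(x, y) \<in> S k m"
  obtains a b :: nat
  where "x > 0" and "a > 0" and "b > 0" and "coprime a b" and "\<bar>int a - int b\<bar> = int k"
    and "y = of_nat m * of_nat a / of_nat b * x" and "y ^ b = x ^ a"
proof -
  from assms obtain a b :: nat where "x > 0" "y > 0" "x \<noteq> 1" "a > 0" "b > 0" "coprime a b"
    and "\<bar>int a - int b\<bar> = int k"
    and eq: "real_of_rat x powr real_of_rat y = real_of_rat y powr (real m * real_of_rat x)"
    and ratio: "ln (real_of_rat y) / ln (real_of_rat x) = real a / real b"
    unfolding S_def by blast
  define X Y where "X = real_of_rat x" and "Y = real_of_rat y"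
  have "X > 0" "Y > 0" "ln X \<noteq> 0" using \<open>x > 0\<close> \<open>y > 0\<close> \<open>x \<noteq> 1\<close> by (simp_all add: X_def Y_def)
  have lnY: "ln Y = real a / real b * ln X"
    using ratio \<open>ln X \<noteq> 0\<close> by (simp add: X_def Y_def field_simps)
  have "Y * ln X = real m * X * ln Y"
    using eq \<open>X > 0\<close> \<open>Y > 0\<close> by (metis X_def Y_def ln_powr)
  then have "Y * ln X = (real m * X * real a / real b) * ln X" by (simp add: lnY)
  then have "Y = real m * X * real a / real b"
    using \<open>ln X \<noteq> 0\<close> by (rule mult_right_cancel[THEN iffD1, rotated])
  then have "real_of_rat y = real_of_rat (of_nat m * of_nat a / of_nat b * x)"
    by (simp add: X_def Y_def of_rat_mult of_rat_divide)
  moreover have "ln (Y ^ b) = ln (X ^ a)"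
    using lnY \<open>b > 0\<close> \<open>X > 0\<close> \<open>Y > 0\<close> by (simp add: ln_realpow field_simps)
  then have "real_of_rat (y ^ b) = real_of_rat (x ^ a)"
    using \<open>X > 0\<close> \<open>Y > 0\<close> by (simp add: X_def Y_def of_rat_power)
  ultimately show ?thesis
    using that \<open>x > 0\<close> \<open>a > 0\<close> \<open>b > 0\<close> \<open>coprime a b\<close> \<open>\<bar>int a - int b\<bar> = int k\<close>
    by (simp only: of_rat_eq_iff)
qed

lemma S_2_imp_square:
  assumes "(x, y) \<in> S 2 m"
  obtains a b :: nat where "coprime a b" and "\<bar>int a - int b\<bar> = 2" and "is_square (m * a * b)"
proof -
  obtain a b :: nat where "x > 0" "b > 0" "coprime a b" and diff: "\<bar>int a - int b\<bar> = 2"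
    and y: "y = of_nat m * of_nat a / of_nat b * x" and "y ^ b = x ^ a"
    using assms by (rule S_memE) simp_all
  define q :: rat where "q = of_nat m * of_nat a / of_nat b"
  have qx: "(q * x) ^ b = x ^ a" using \<open>y ^ b = x ^ a\<close> by (simp add: y q_def)
  have "a = b + 2 \<or> b = a + 2" using diff by linarith
  then obtain w where w: "q ^ b = w\<^sup>2"
  proof
    assume "a = b + 2"
    then have "x ^ a = x\<^sup>2 * x ^ b" by (simp add: power_add power2_eq_square)
    with qx have "q ^ b * x ^ b = x\<^sup>2 * x ^ b" by (simp add: power_mult_distrib)
    with \<open>x > 0\<close> have "q ^ b = x\<^sup>2" by simp
    then show ?thesis using that by blast
  next
    assume "b = a + 2"
    then have "x ^ b = x\<^sup>2 * x ^ a" by (simp add: power_add power2_eq_square)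
    with qx have "(q ^ b * x\<^sup>2) * x ^ a = 1 * x ^ a" by (simp add: power_mult_distrib ac_simps)
    with \<open>x > 0\<close> have "q ^ b = (1 / x)\<^sup>2" by (simp add: field_simps)
    then show ?thesis using that by blast
  qed
  have "odd b"
    using coprime_diff_2_mult_mod_4[OF \<open>coprime a b\<close> diff]
    by (metis dvd_mod_iff even_mult_iff even_numeral odd_numeral)
  then have "is_square q" using w by (rule odd_power_square_imp_square)
  then obtain s where "q = s\<^sup>2" by (elim is_nth_powerE)
  then have "(of_nat b * s)\<^sup>2 = (of_nat (m * a * b) :: rat)"
    using \<open>b > 0\<close> by (simp add: q_def field_simps power2_eq_square)
  then have "is_square (m * a * b)" by (rule rat_power_eq_of_nat_imp_nth_power)
  with that \<open>coprime a b\<close> diff show ?thesis by blast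
qed

theorem lemma5:
  fixes m :: nat
  assumes "m > 0"
    and "(m div 2 ^ nu2 m) mod 4 = 1"
  shows "S 2 m = {}"
proof (rule ccontr)
  assume "S 2 m \<noteq> {}"
  then obtain x y where "(x, y) \<in> S 2 m" by auto
  then obtain a b :: nat
    where "coprime a b" "\<bar>int a - int b\<bar> = 2" and square: "is_square (m * a * b)"
    by (rule S_2_imp_square)
  define m1 where "m1 = m div 2 ^ nu2 m"
  have "m = 2 ^ nu2 m * m1" unfolding m1_def nu2_def by (simp add: multiplicity_dvd)
  then have "m * a * b = 2 ^ nu2 m * (m1 * (a * b))" by (simp add: ac_simps)
  moreover have "m1 * (a * b) mod 4 = (m1 mod 4) * (a * b mod 4) mod 4"
    by (rule mod_mult_eq[symmetric])
  then have "m1 * (a * b) mod 4 = 3"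
    using assms(2) coprime_diff_2_mult_mod_4[OF \<open>coprime a b\<close> \<open>\<bar>int a - int b\<bar> = 2\<close>]
    by (simp add: m1_def)
  ultimately have "\<not> is_square (m * a * b)" by (metis not_square_pow2_mult_3_mod_4)
  with square show False by contradiction
qed

end
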